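(* A bidirectional graph $G$ is 2-rooted if and only if it contains a DEP-induced graph as a spanning subgraph.
   Context: Graphs $G=(V,E)$ are directed with $E\subseteq\{(i,k):i\ne k\}$. $G$ is bidirectional if $(i,j)\in E\Rightarrow(j,i)\in E$. A bidirectional path from $i_1$ to $i_k$ is a sequence of distinct vertices $i_1,\dots,i_k$ with $(i_l,i_{l+1}),(i_{l+1},i_l)\in E$ for all $l$. In a bidirectional graph, a vertex $i$ is 2-reachable from a set $U$ of at least two vertices if, after removing any single vertex other than $i$, there is a bidirectional path from some vertex of $U$ to $i$. $G$ is 2-rooted if there is a set of two vertices (roots) from which every other vertex is 2-reachable. A dual-entry path (DEP) with distinct entry vertices $i,j$ and $\ell\ge1$ inner vertices $v_1,\dots,v_\ell$ has vertex set $\{i,j,v_1,\dots,v_\ell\}$ and edge set $\{(i,v_1),(j,v_1)\}$ if $\ell=1$, and $\{(i,v_1),(j,v_\ell)\}\cup\{(v_r,v_{r+1}),(v_{r+1},v_r):1\le r<\ell\}$ if $\ell\ge2$. A DEP-induced graph $\mathcal L_\kappa$ ($\kappa\ge0$): $\mathcal L_0$ consists of two vertices and no edges; for $h=1,\dots,\kappa$, $\mathcal L_h$ is obtained from $\mathcal L_{h-1}$ by attaching a DEP whose two distinct entry vertices belong to $\mathcal L_{h-1}$ and whose inner vertices are new (taking unions of vertex and edge sets). A spanning subgraph of $G$ has vertex set $V$ and edge set contained in $E$. *)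

theory Defs
  imports Main
begin

definition digraph :: "'a set \<Rightarrow> ('a \<times> 'a) set \<Rightarrow> bool" where
  "digraph V E \<longleftrightarrow> E \<subseteq> {(i, k). i \<in> V \<and> k \<in> V \<and> i \<noteq> k}"

definition bidirectional :: "('a \<times> 'a) set \<Rightarrow> bool" where
  "bidirectional E \<longleftrightarrow> (\<forall>i j. (i, j) \<in> E \<longrightarrow> (j, i) \<in> E)"

definition bipath :: "'a set \<Rightarrow> ('a \<times> 'a) set \<Rightarrow> 'a list \<Rightarrow> bool" where
  "bipath V E p \<longleftrightarrow> p \<noteq> [] \<and> distinct p \<and> set p \<subseteq> V \<and>
     (\<forall>l. Suc l < length p \<longrightarrow> (p ! l, p ! Suc l) \<in> E \<and> (p ! Suc l, p ! l) \<in> E)"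

definition two_reachable :: "'a set \<Rightarrow> ('a \<times> 'a) set \<Rightarrow> 'a set \<Rightarrow> 'a \<Rightarrow> bool" where
  "two_reachable V E U i \<longleftrightarrow> card U \<ge> 2 \<and>
     (\<forall>w \<in> V. w \<noteq> i \<longrightarrow>
        (\<exists>p. bipath (V - {w}) {e \<in> E. fst e \<noteq> w \<and> snd e \<noteq> w} p \<and>
             hd p \<in> U \<and> last p = i))"

definition two_rooted :: "'a set \<Rightarrow> ('a \<times> 'a) set \<Rightarrow> bool" where
  "two_rooted V E \<longleftrightarrow> (\<exists>r1 r2. r1 \<in> V \<and> r2 \<in> V \<and> r1 \<noteq> r2 \<and>
     (\<forall>i \<in> V - {r1, r2}. two_reachable V E {r1, r2} i))"

text \<open>Edge set of a dual-entry path with entries i, j and inner vertices vs = [v_1,...,v_l].\<close>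
definition dep_edges :: "'a \<Rightarrow> 'a \<Rightarrow> 'a list \<Rightarrow> ('a \<times> 'a) set" where
  "dep_edges i j vs =
     (if length vs = 1 then {(i, vs ! 0), (j, vs ! 0)}
      else {(i, vs ! 0), (j, last vs)} \<union>
        {(vs ! r, vs ! Suc r) | r. Suc r < length vs} \<union>
        {(vs ! Suc r, vs ! r) | r. Suc r < length vs})"

inductive dep_induced :: "'a set \<Rightarrow> ('a \<times> 'a) set \<Rightarrow> bool" where
  base: "a \<noteq> b \<Longrightarrow> dep_induced {a, b} {}"
| step: "dep_induced V E \<Longrightarrow> i \<in> V \<Longrightarrow> j \<in> V \<Longrightarrow> i \<noteq> j \<Longrightarrow> vs \<noteq> [] \<Longrightarrow>
         distinct vs \<Longrightarrow> set vs \<inter> V = {} \<Longrightarrow>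
         dep_induced (V \<union> set vs) (E \<union> dep_edges i j vs)"

end

theory Submission
  imports Defs
begin

text \<open>
  A DEP-induced graph is 2-rooted from the two vertices of its initial graph, even along edges
  taken only in the orientation in which they were attached: an inner vertex v of a new DEP with
  entries i, j is reached through i followed by the inner path up to v, or through j followed
  by the reversed inner path down to v, and a single deleted vertex can block at most one of
  these two routes.

  Conversely, grow a DEP-induced subgraph on a vertex set S from the two roots. While some
  vertex u lies outside S, a path from the roots to u avoiding r1 leaves S along an edge (s, x).
  A path from the roots to x avoiding s leaves S for the last time at some s' \<noteq> s, and the
  rest of it, closed by the edge between x and s, is a DEP with entries s', s and inner vertices
  outside S.
\<close>

definition rel_path :: "('a \<times> 'a) set \<Rightarrow> 'a list \<Rightarrow> bool" where
  "rel_path R p \<longleftrightarrow> p \<noteq> [] \<and> distinct p \<and> successively (\<lambda>a b. (a, b) \<in> R) p"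

lemma rel_path_mono: "rel_path R p \<Longrightarrow> R \<subseteq> R' \<Longrightarrow> rel_path R' p"
  unfolding rel_path_def by (auto elim: successively_mono)

lemma rel_path_append:
  assumes "rel_path R p" "rel_path R q" "set p \<inter> set q = {}" "(last p, hd q) \<in> R"
  shows "rel_path R (p @ q)"
  using assms unfolding rel_path_def by (simp add: successively_append_iff)

lemma rel_path_appendD1: "rel_path R (xs @ ys) \<Longrightarrow> xs \<noteq> [] \<Longrightarrow> rel_path R xs"
  unfolding rel_path_def by (simp add: successively_append_iff)

lemma rel_path_appendD2: "rel_path R (xs @ ys) \<Longrightarrow> ys \<noteq> [] \<Longrightarrow> rel_path R ys"
  unfolding rel_path_def by (simp add: successively_append_iff)

lemma rel_path_exit:
  assumes "rel_path R p" "hd p \<in> S" "last p \<notin> S"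
  obtains s bs where "s \<in> S" "bs \<noteq> []" "set bs \<inter> S = {}" "rel_path R (s # bs)"
    "set (s # bs) \<subseteq> set p" "last bs = last p"
proof -
  have "p \<noteq> []" using assms(1) by (simp add: rel_path_def)
  then have "\<exists>y \<in> set p. y \<in> S" using assms(2) by auto
  then obtain as s bs where p: "p = as @ s # bs" "s \<in> S" "\<forall>y \<in> set bs. y \<notin> S"
    by (rule split_list_last_propE)
  have "bs \<noteq> []" using p assms(3) by auto
  then show thesis
    using that p assms(1) rel_path_appendD2[of R as "s # bs"] by auto
qed

lemma bipath_iff_rel_path: "bipath V E p \<longleftrightarrow> rel_path (E \<inter> E\<inverse>) p \<and> set p \<subseteq> V"
  unfolding bipath_def rel_path_def successively_conv_nth by auto

lemma bipath_avoiding_iff: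
  assumes "bidirectional E"
  shows "bipath (V - {w}) {e \<in> E. fst e \<noteq> w \<and> snd e \<noteq> w} p \<longleftrightarrow>
    rel_path E p \<and> set p \<subseteq> V - {w}"
proof -
  have "successively (\<lambda>a b. (a, b) \<in> E) p \<longleftrightarrow>
      successively (\<lambda>a b. (a, b) \<in> {e \<in> E. fst e \<noteq> w \<and> snd e \<noteq> w} \<inter>
        {e \<in> E. fst e \<noteq> w \<and> snd e \<noteq> w}\<inverse>) p"
    if "set p \<subseteq> V - {w}"
    using that assms unfolding bidirectional_def
    by (intro successively_cong) auto
  then show ?thesis
    unfolding bipath_iff_rel_path rel_path_def by blast
qed

lemma two_reachable_iff:
  assumes "bidirectional E"
  shows "two_reachable V E U i \<longleftrightarrow> 2 \<le> card U \<and>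
    (\<forall>w \<in> V. w \<noteq> i \<longrightarrow> (\<exists>p. rel_path E p \<and> set p \<subseteq> V - {w} \<and> hd p \<in> U \<and> last p = i))"
  unfolding two_reachable_def bipath_avoiding_iff[OF assms] by blast

lemma dep_edges_path:
  assumes "vs \<noteq> []" "distinct vs"
  shows "rel_path (dep_edges i j vs) vs"
  using assms unfolding rel_path_def successively_conv_nth
  by (cases "length vs = 1") (auto simp: dep_edges_def)

lemma dep_edges_hd: "vs \<noteq> [] \<Longrightarrow> (i, hd vs) \<in> dep_edges i j vs"
  by (auto simp: dep_edges_def hd_conv_nth)

lemma dep_edges_rev:
  assumes "vs \<noteq> []"
  shows "dep_edges j i (rev vs) = dep_edges i j vs"
proof -
  let ?n = "length vs"
  have fwd: "{(rev vs ! r, rev vs ! Suc r) | r. Suc r < ?n} = {(vs ! Suc r, vs ! r) | r. Suc r < ?n}"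
  proof (intro equalityI subsetI)
    fix e assume "e \<in> {(rev vs ! r, rev vs ! Suc r) | r. Suc r < ?n}"
    then obtain r where "e = (rev vs ! r, rev vs ! Suc r)" "Suc r < ?n" by blast
    then show "e \<in> {(vs ! Suc r, vs ! r) | r. Suc r < ?n}"
      by (auto simp: rev_nth intro!: exI[of _ "?n - Suc (Suc r)"] arg_cong2[where f = "(!)"])
  next
    fix e assume "e \<in> {(vs ! Suc r, vs ! r) | r. Suc r < ?n}"
    then obtain r where "e = (vs ! Suc r, vs ! r)" "Suc r < ?n" by blast
    then show "e \<in> {(rev vs ! r, rev vs ! Suc r) | r. Suc r < ?n}"
      by (auto simp: rev_nth Suc_diff_Suc intro!: exI[of _ "?n - Suc (Suc r)"])
  qed
  have bwd: "{(rev vs ! Suc r, rev vs ! r) | r. Suc r < ?n} = {(vs ! r, vs ! Suc r) | r. Suc r < ?n}"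
    using fwd by blast
  show ?thesis
  proof (cases "?n = 1")
    case True
    then obtain v where "vs = [v]" by (cases vs) auto
    then show ?thesis by (auto simp: dep_edges_def)
  next
    case False
    then show ?thesis
      using assms unfolding dep_edges_def length_rev fwd bwd
      by (auto simp: hd_rev last_rev hd_conv_nth[symmetric] last_conv_nth[symmetric])
  qed
qed

definition robustly_reachable :: "('a \<times> 'a) set \<Rightarrow> 'a set \<Rightarrow> 'a set \<Rightarrow> bool" where
  "robustly_reachable R S U \<longleftrightarrow> (\<forall>w. \<forall>v \<in> S - {w}.
     \<exists>p. rel_path R p \<and> set p \<subseteq> S - {w} \<and> hd p \<in> U \<and> last p = v)"

lemma robustly_reachable_refl: "robustly_reachable R U U"
  unfolding robustly_reachable_def rel_path_def by (auto intro!: exI[of _ "[_]"])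

lemma robustly_reachable_mono:
  "robustly_reachable R S U \<Longrightarrow> R \<subseteq> R' \<Longrightarrow> robustly_reachable R' S U"
  unfolding robustly_reachable_def by (meson rel_path_mono)

lemma rel_path_into_ear:
  assumes "rel_path R p" "set p \<subseteq> S" "(last p, hd ws) \<in> R"
    and "rel_path R ws" "set ws \<inter> S = {}" "ws = as @ v # bs"
  shows "rel_path R (p @ as @ [v])"
proof (rule rel_path_append)
  show "rel_path R (as @ [v])"
    using assms(4,6) rel_path_appendD1[of R "as @ [v]" bs] by simp
  show "set p \<inter> set (as @ [v]) = {}" "(last p, hd (as @ [v])) \<in> R"
    using assms(2,3,5,6) by (auto simp: hd_append)
qed (fact assms(1))

lemma dep_edges_entry:
  assumes ij: "i \<in> S" "j \<in> S" "i \<noteq> j"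
    and vs: "vs \<noteq> []" "distinct vs" "set vs \<inter> S = {}" and v: "v \<in> set vs"
  obtains k ws as bs where "k \<in> S - {w}" "(k, hd ws) \<in> dep_edges i j vs"
    "rel_path (dep_edges i j vs) ws" "set ws = set vs" "ws = as @ v # bs" "w \<notin> set as"
proof -
  obtain as bs where split: "vs = as @ v # bs"
    using v by (auto dest: split_list)
  show thesis
  proof (cases "w \<notin> set as \<and> w \<noteq> i")
    case True
    then show thesis
      using that ij(1) split dep_edges_path[OF vs(1,2)] dep_edges_hd[OF vs(1)] by blast
  next
    case False
    then have "w \<notin> set bs \<and> w \<noteq> j"
      using ij vs split by auto
    moreover have "rev vs = rev bs @ v # rev as"
      using split by simp
    moreover have "rel_path (dep_edges i j vs) (rev vs)" "(j, hd (rev vs)) \<in> dep_edges i j vs"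
      using dep_edges_path[of "rev vs" j i] dep_edges_hd[of "rev vs" j i] vs
      by (simp_all add: dep_edges_rev)
    ultimately show thesis
      using that ij(2) set_rev[of vs] set_rev[of bs] by blast
  qed
qed

lemma robustly_reachable_ear:
  assumes reach: "robustly_reachable F S U"
    and ij: "i \<in> S" "j \<in> S" "i \<noteq> j"
    and vs: "vs \<noteq> []" "distinct vs" "set vs \<inter> S = {}"
  shows "robustly_reachable (F \<union> dep_edges i j vs) (S \<union> set vs) U"
  unfolding robustly_reachable_def
proof (intro allI ballI)
  let ?R = "F \<union> dep_edges i j vs"
  have old_path: "rel_path ?R p" if "rel_path F p" for p
    using that rel_path_mono by blast
  have ear_path: "rel_path ?R p" if "rel_path (dep_edges i j vs) p" for p
    using that rel_path_mono by blast
  fix w v assume v: "v \<in> S \<union> set vs - {w}"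
  show "\<exists>p. rel_path ?R p \<and> set p \<subseteq> S \<union> set vs - {w} \<and> hd p \<in> U \<and> last p = v"
  proof (cases "v \<in> S")
    case True
    then obtain p where "rel_path F p" "set p \<subseteq> S - {w}" "hd p \<in> U" "last p = v"
      using v reach unfolding robustly_reachable_def by blast
    then show ?thesis using old_path by blast
  next
    case False
    then obtain k ws as bs where k: "k \<in> S - {w}" "(k, hd ws) \<in> dep_edges i j vs"
      "rel_path (dep_edges i j vs) ws" "set ws = set vs" "ws = as @ v # bs" "w \<notin> set as"
      using dep_edges_entry[OF ij vs] v by blast
    obtain p where p: "rel_path F p" "set p \<subseteq> S - {w}" "hd p \<in> U" "last p = k"
      using reach k(1) unfolding robustly_reachable_def by blast
    have "rel_path ?R (p @ as @ [v])"
      using rel_path_into_ear[OF old_path[OF p(1)] _ _ ear_path[OF k(3)] _ k(5)] p k vs(3) by auto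
    moreover have "set (p @ as @ [v]) \<subseteq> S \<union> set vs - {w}"
      using p(2) k(4-6) v by auto
    moreover have "hd (p @ as @ [v]) = hd p"
      using p(1) by (simp add: rel_path_def)
    ultimately show ?thesis using p(3) by (intro exI[of _ "p @ as @ [v]"]) simp
  qed
qed

lemma dep_induced_robustly_reachable:
  "dep_induced S F \<Longrightarrow> \<exists>r1 r2. r1 \<in> S \<and> r2 \<in> S \<and> r1 \<noteq> r2 \<and> robustly_reachable F S {r1, r2}"
proof (induction rule: dep_induced.induct)
  case (base a b)
  then show ?case using robustly_reachable_refl by blast
next
  case (step S F i j vs)
  then obtain r1 r2 where "r1 \<in> S" "r2 \<in> S" "r1 \<noteq> r2" "robustly_reachable F S {r1, r2}"
    by blast
  with step.hyps show ?case by (blast intro: robustly_reachable_ear)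
qed

lemma dep_edges_subset:
  assumes "bidirectional E" "vs \<noteq> []" "rel_path E (i # vs)" "(j, last vs) \<in> E"
  shows "dep_edges i j vs \<subseteq> E"
proof -
  have "successively (\<lambda>a b. (a, b) \<in> E) vs"
    using assms(3) by (auto simp: rel_path_def successively_Cons)
  then have inner: "(vs ! r, vs ! Suc r) \<in> E" "(vs ! Suc r, vs ! r) \<in> E" if "Suc r < length vs" for r
    using assms(1) successively_nth[OF _ that] unfolding bidirectional_def by blast+
  have "(i, vs ! 0) \<in> E"
    using assms(2,3) by (cases vs) (auto simp: rel_path_def)
  then show ?thesis
    using assms(2,4) inner unfolding dep_edges_def
    by (auto simp: last_conv_nth)
qed

lemma exists_dep_ear:
  assumes bd: "bidirectional E"
    and tr: "\<forall>i \<in> V - {r1, r2}. two_reachable V E {r1, r2} i"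
    and S: "r1 \<in> S" "r2 \<in> S" "S \<subseteq> V" and u: "u \<in> V - S"
  obtains i j vs where "i \<in> S" "j \<in> S" "i \<noteq> j" "vs \<noteq> []" "distinct vs"
    "set vs \<subseteq> V - S" "dep_edges i j vs \<subseteq> E"
proof -
  have reach: "\<exists>p. rel_path E p \<and> set p \<subseteq> V - {w} \<and> hd p \<in> {r1, r2} \<and> last p = v"
    if "v \<in> V - S" "w \<in> S" for v w
  proof -
    have "v \<in> V - {r1, r2}" "w \<in> V" "w \<noteq> v" using that S by auto
    then show ?thesis using tr unfolding two_reachable_iff[OF bd] by blast
  qed
  obtain p where p: "rel_path E p" "set p \<subseteq> V - {r1}" "hd p \<in> {r1, r2}" "last p = u"
    using reach[OF u S(1)] by blast
  have "hd p \<in> S" "last p \<notin> S" using p(3,4) S u by auto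
  then obtain s bs where s: "s \<in> S" "bs \<noteq> []" "set bs \<inter> S = {}" "rel_path E (s # bs)"
    "set (s # bs) \<subseteq> set p"
    by (rule rel_path_exit[OF p(1)])
  define x where "x = hd bs"
  have sx: "(s, x) \<in> E"
    using s(2,4) unfolding x_def rel_path_def by (cases bs) auto
  have x: "x \<in> V - S"
    using s(2,3,5) p(2) unfolding x_def by (cases bs) auto
  obtain q where q: "rel_path E q" "set q \<subseteq> V - {s}" "hd q \<in> {r1, r2}" "last q = x"
    using reach[OF x s(1)] by blast
  have "hd q \<in> S" "last q \<notin> S" using q(3,4) S x by auto
  then obtain s' cs where s': "s' \<in> S" "cs \<noteq> []" "set cs \<inter> S = {}" "rel_path E (s' # cs)"
    "set (s' # cs) \<subseteq> set q" "last cs = x"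
    by (rule rel_path_exit[OF q(1)]) (simp add: q(4))
  have "dep_edges s' s cs \<subseteq> E"
    using dep_edges_subset[OF bd s'(2,4)] sx bd s'(6) unfolding bidirectional_def by blast
  moreover have "s' \<noteq> s" "distinct cs" "set cs \<subseteq> V - S"
    using s'(3-5) q(2) unfolding rel_path_def by auto
  ultimately show thesis
    using that s(1) s'(1,2) by blast
qed

lemma dep_induced_extends_to_spanning:
  assumes "finite V" "bidirectional E"
    and tr: "\<forall>i \<in> V - {r1, r2}. two_reachable V E {r1, r2} i"
    and "dep_induced S F" "F \<subseteq> E" "S \<subseteq> V" "r1 \<in> S" "r2 \<in> S"
  shows "\<exists>F' \<subseteq> E. dep_induced V F'"
  using assms(4-)
proof (induction "card (V - S)" arbitrary: S F rule: less_induct)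
  case less
  show ?case
  proof (cases "S = V")
    case True
    then show ?thesis using less.prems by blast
  next
    case False
    then obtain u where "u \<in> V - S" using less.prems(3) by blast
    then obtain i j vs where ear: "i \<in> S" "j \<in> S" "i \<noteq> j" "vs \<noteq> []" "distinct vs"
      "set vs \<subseteq> V - S" "dep_edges i j vs \<subseteq> E"
      using exists_dep_ear[OF assms(2) tr less.prems(4,5,3)] by blast
    have "card (V - (S \<union> set vs)) < card (V - S)"
      using ear(4,6) assms(1) by (intro psubset_card_mono) (auto simp: neq_Nil_conv)
    moreover have "dep_induced (S \<union> set vs) (F \<union> dep_edges i j vs)"
      using ear by (intro dep_induced.step less.prems(1)) auto
    moreover have "F \<union> dep_edges i j vs \<subseteq> E" "S \<union> set vs \<subseteq> V"
      using less.prems(2,3) ear(6,7) by auto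
    ultimately show ?thesis
      using less.hyps less.prems(4,5) by blast
  qed
qed

theorem lemma1:
  fixes V :: "'a set" and E :: "('a \<times> 'a) set"
  assumes "finite V" and "digraph V E" and "bidirectional E"
  shows "two_rooted V E \<longleftrightarrow> (\<exists>E' \<subseteq> E. dep_induced V E')"
proof
  assume "two_rooted V E"
  then obtain r1 r2 where r: "r1 \<in> V" "r2 \<in> V" "r1 \<noteq> r2"
    and tr: "\<forall>i \<in> V - {r1, r2}. two_reachable V E {r1, r2} i"
    unfolding two_rooted_def by blast
  show "\<exists>E' \<subseteq> E. dep_induced V E'"
    using dep_induced_extends_to_spanning[OF assms(1,3) tr dep_induced.base[OF r(3)]] r by blast
next
  assume "\<exists>E' \<subseteq> E. dep_induced V E'"
  then obtain E' where E': "E' \<subseteq> E" "dep_induced V E'" by blast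
  obtain r1 r2 where r: "r1 \<in> V" "r2 \<in> V" "r1 \<noteq> r2" "robustly_reachable E' V {r1, r2}"
    using dep_induced_robustly_reachable[OF E'(2)] by blast
  have "robustly_reachable E V {r1, r2}"
    using robustly_reachable_mono[OF r(4) E'(1)] .
  then have "two_reachable V E {r1, r2} i" if "i \<in> V - {r1, r2}" for i
    using that r(3) unfolding two_reachable_iff[OF assms(3)] robustly_reachable_def
    by auto
  then show "two_rooted V E"
    unfolding two_rooted_def using r(1-3) by blast
qed

end
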